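(* Let $(X_i,p_i)\to(X,p)$ be complete Riemannian manifolds converging in the pointed Gromov–Hausdorff sense and let $\pi_i:E_i\to X_i$ be vector bundles with bundle metrics and compatible connections, endowed with Sasaki-type metrics, converging to $(E,\varsigma(p))$, with $\pi:E\to X$ the limit projection. Let $\alpha:[0,1]\to X$ be a rectifiable curve. Then for every $u\in\pi^{-1}(\alpha(0))$ there exists a horizontal curve $\gamma$ in $E$ with $\gamma(0)=u$ and $\pi\circ\gamma=\alpha$; in particular $\gamma(1)\in\pi^{-1}(\alpha(1))$, i.e. $\mathcal{P}^\alpha(u)\neq\varnothing$.
   Context: $\pi:E\to X$ is a submetry (limit of the Riemannian submersions $\pi_i$); $\varsigma$ is the limit of the zero sections. A curve $\gamma$ in $E$ is horizontal if $\ell(\gamma)=\ell(\pi\circ\gamma)$. For a curve $\alpha$ in $X$ and $u\in\pi^{-1}(\alpha(0))$, $\mathcal{P}^\alpha(u)=\{\gamma(1):\gamma$ horizontal, $\gamma(0)=u$, $\pi\circ\gamma=\alpha\}$. *)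

theory Defs
  imports "HOL-Analysis.Analysis"
begin

definition curve_length :: "(real \<Rightarrow> 'a::metric_space) \<Rightarrow> real \<Rightarrow> real \<Rightarrow> ereal" where
  "curve_length f a b =
     (SUP p \<in> {(t, n). t (0::nat) = a \<and> t n = b \<and> (\<forall>k<n. t k \<le> t (Suc k))}.
        ereal (\<Sum>k < snd p. dist (f (fst p k)) (f (fst p (Suc k)))))"

definition rectifiable_curve :: "(real \<Rightarrow> 'a::metric_space) \<Rightarrow> bool" where
  "rectifiable_curve f \<longleftrightarrow> continuous_on {0..1} f \<and> curve_length f 0 1 < \<infinity>"

definition submetry :: "('e::metric_space \<Rightarrow> 'x::metric_space) \<Rightarrow> bool" where
  "submetry \<pi> \<longleftrightarrow> surj \<pi> \<and> (\<forall>e r. r \<ge> 0 \<longrightarrow> \<pi> ` cball e r = cball (\<pi> e) r)"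

definition horizontal :: "('e::metric_space \<Rightarrow> 'x::metric_space) \<Rightarrow> (real \<Rightarrow> 'e) \<Rightarrow> bool" where
  "horizontal \<pi> \<gamma> \<longleftrightarrow> continuous_on {0..1} \<gamma> \<and> curve_length \<gamma> 0 1 = curve_length (\<pi> \<circ> \<gamma>) 0 1"

definition horiz_transport ::
  "('e::metric_space \<Rightarrow> 'x::metric_space) \<Rightarrow> (real \<Rightarrow> 'x) \<Rightarrow> 'e \<Rightarrow> 'e set" where
  "horiz_transport \<pi> \<alpha> u =
     {\<gamma> 1 | \<gamma>. horizontal \<pi> \<gamma> \<and> \<gamma> 0 = u \<and> (\<forall>t\<in>{0..1}. \<pi> (\<gamma> t) = \<alpha> t)}"

end

theory Submission
  imports Defs
begin

text \<open>
  Let \<open>\<ell> t\<close> be the length of \<open>\<alpha>\<close> on \<open>[0, t]\<close>; it is continuous and nondecreasing.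
  Since a submetry maps balls onto balls, a point over \<open>\<alpha> s\<close> can be moved to a point over
  \<open>\<alpha> t\<close> at distance at most \<open>dist (\<alpha> s) (\<alpha> t) \<le> \<ell> t - \<ell> s\<close>. Lifting along any finite set
  of times in increasing order therefore yields lifts \<open>g\<close> with \<open>dist (g s) (g t) \<le> \<ell> t - \<ell> s\<close>.
  These constraints are closed in the (Tychonoff) compact product of the sets
  \<open>\<pi> -` {\<alpha> t} \<inter> cball u (\<ell> t)\<close>, so a single lift satisfies all of them on \<open>[0, 1]\<close>.
  That lift \<open>\<gamma>\<close> is continuous, and its length is at most \<open>\<ell> 1\<close>, the length of \<open>\<alpha> = \<pi> \<circ> \<gamma>\<close>,
  which is at most the length of \<open>\<gamma>\<close> since \<open>\<pi>\<close> is 1-Lipschitz; so \<open>\<gamma>\<close> is horizontal.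
\<close>

definition partitions :: "real \<Rightarrow> real \<Rightarrow> ((nat \<Rightarrow> real) \<times> nat) set" where
  "partitions a b = {(t, n). t 0 = a \<and> t n = b \<and> (\<forall>k<n. t k \<le> t (Suc k))}"

definition partition_sum :: "(real \<Rightarrow> 'a::metric_space) \<Rightarrow> (nat \<Rightarrow> real) \<times> nat \<Rightarrow> real" where
  "partition_sum f p = (\<Sum>k < snd p. dist (f (fst p k)) (f (fst p (Suc k))))"

lemma curve_length_eq_SUP:
  "curve_length f a b = (SUP p\<in>partitions a b. ereal (partition_sum f p))"
  by (simp add: curve_length_def partitions_def partition_sum_def)

lemma partition_sum_le_curve_length:
  "p \<in> partitions a b \<Longrightarrow> ereal (partition_sum f p) \<le> curve_length f a b"
  unfolding curve_length_eq_SUP by (rule SUP_upper)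

lemma curve_length_le:
  "(\<And>p. p \<in> partitions a b \<Longrightarrow> partition_sum f p \<le> B) \<Longrightarrow> curve_length f a b \<le> ereal B"
  unfolding curve_length_eq_SUP by (rule SUP_least) simp

lemma partitions_mono:
  assumes "(t, n) \<in> partitions a b" "j \<le> k" "k \<le> n"
  shows "t j \<le> t k"
  using assms(2,3)
proof (induction k)
  case (Suc k)
  then show ?case
    using assms(1) by (cases "j = Suc k") (auto simp: partitions_def intro: order_trans)
qed simp

lemma partitions_bounds:
  assumes "(t, n) \<in> partitions a b" "k \<le> n"
  shows "t k \<in> {a..b}"
  using partitions_mono[OF assms(1), of 0 k] partitions_mono[OF assms(1), of k n] assms
  by (auto simp: partitions_def)

lemma partitions_nonempty: "a \<le> b \<Longrightarrow> partitions a b \<noteq> {}"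
proof -
  assume "a \<le> b"
  then have "(\<lambda>k. if k = 0 then a else b, 1) \<in> partitions a b" by (simp add: partitions_def)
  then show ?thesis by blast
qed

lemma dist_le_curve_length: "a \<le> b \<Longrightarrow> ereal (dist (f a) (f b)) \<le> curve_length f a b"
  using partition_sum_le_curve_length[of "(\<lambda>k. if k = 0 then a else b, 1)" a b f]
  by (simp add: partitions_def partition_sum_def)

lemma curve_length_nonneg: "a \<le> b \<Longrightarrow> 0 \<le> curve_length f a b"
  using dist_le_curve_length[of a b f] by (metis ereal_less_eq(3) order_trans zero_ereal_def zero_le_dist)

lemma partitions_clamp:
  assumes "(t, n) \<in> partitions a b" "c \<in> {a..b}"
  shows "(\<lambda>k. min c (t k), n) \<in> partitions a c" and "(\<lambda>k. max c (t k), n) \<in> partitions c b"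
  using assms by (auto simp: partitions_def min_def max_def)

lemma partition_sum_le_clamp:
  assumes "(t, n) \<in> partitions a b"
  shows "partition_sum f (t, n)
           \<le> partition_sum f (\<lambda>k. min c (t k), n) + partition_sum f (\<lambda>k. max c (t k), n)"
proof -
  have "dist (f (t k)) (f (t (Suc k))) \<le> dist (f (min c (t k))) (f (min c (t (Suc k))))
          + dist (f (max c (t k))) (f (max c (t (Suc k))))" if "k < n" for k
  proof -
    have le: "t k \<le> t (Suc k)" using assms that by (auto simp: partitions_def)
    consider "t (Suc k) \<le> c" | "c \<le> t k" | "t k \<le> c" "c \<le> t (Suc k)" by linarith
    then show ?thesis
    proof cases
      case 3
      then show ?thesis using dist_triangle[of "f (t k)" "f (t (Suc k))" "f c"] by (simp add: min_def max_def)
    qed (use le in \<open>simp_all add: min_def max_def\<close>)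
  qed
  then show ?thesis
    unfolding partition_sum_def by (simp add: sum.distrib[symmetric]) (rule sum_mono, simp)
qed

lemma partitions_append:
  assumes "(t, n) \<in> partitions a c" "(t', m) \<in> partitions c b"
  defines "s \<equiv> \<lambda>k. if k \<le> n then t k else t' (k - n)"
  shows "(s, n + m) \<in> partitions a b"
    and "partition_sum f (s, n + m) = partition_sum f (t, n) + partition_sum f (t', m)"
proof -
  have s_shift: "s (n + i) = t' i" for i
    using assms by (cases i) (simp_all add: s_def partitions_def)
  have "s k \<le> s (Suc k)" if "k < n + m" for k
  proof (cases "k < n")
    case True then show ?thesis using assms(1) by (simp add: partitions_def s_def)
  next
    case False
    define i where "i = k - n"
    have "k = n + i" "i < m" using False that by (simp_all add: i_def)
    then show ?thesis using assms(2) by (simp add: s_shift flip: add_Suc_right add: partitions_def)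
  qed
  moreover have "s 0 = a" using assms(1) by (simp add: s_def partitions_def)
  moreover have "s (n + m) = b" using assms(2) by (simp add: s_shift partitions_def)
  ultimately show "(s, n + m) \<in> partitions a b" unfolding partitions_def by simp
  have sum_append: "(\<Sum>k<n + m. g k) = (\<Sum>k<n. g k) + (\<Sum>i<m. g (n + i))" for g :: "nat \<Rightarrow> real"
    by (induction m) (simp_all add: add.assoc)
  have "(\<Sum>k<n. dist (f (s k)) (f (s (Suc k)))) = partition_sum f (t, n)"
    unfolding partition_sum_def by (intro sum.cong) (auto simp: s_def)
  moreover have "(\<Sum>i<m. dist (f (s (n + i))) (f (s (Suc (n + i))))) = partition_sum f (t', m)"
    unfolding partition_sum_def by (simp flip: add_Suc_right add: s_shift)
  ultimately show "partition_sum f (s, n + m) = partition_sum f (t, n) + partition_sum f (t', m)"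
    unfolding partition_sum_def by (simp add: sum_append)
qed

lemma curve_length_le_add:
  assumes "a \<le> c" "c \<le> b"
  shows "curve_length f a b \<le> curve_length f a c + curve_length f c b"
  unfolding curve_length_eq_SUP[of f a b]
proof (rule SUP_least)
  fix p assume "p \<in> partitions a b"
  then obtain t n where p: "p = (t, n)" "(t, n) \<in> partitions a b" by (cases p) auto
  have "ereal (partition_sum f p)
          \<le> ereal (partition_sum f (\<lambda>k. min c (t k), n)) + ereal (partition_sum f (\<lambda>k. max c (t k), n))"
    using partition_sum_le_clamp[OF p(2), of f c] p(1) by simp
  also have "\<dots> \<le> curve_length f a c + curve_length f c b"
    using assms by (intro add_mono partition_sum_le_curve_length partitions_clamp[OF p(2)]) auto
  finally show "ereal (partition_sum f p) \<le> curve_length f a c + curve_length f c b" .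
qed

lemma curve_length_add_le:
  assumes "a \<le> c" "c \<le> b"
  shows "curve_length f a c + curve_length f c b \<le> curve_length f a b"
proof -
  have "(SUP p\<in>partitions a c. ereal (partition_sum f p)) + curve_length f c b
          = (SUP p\<in>partitions a c. ereal (partition_sum f p) + curve_length f c b)"
    using assms curve_length_nonneg[of c b f]
    by (intro SUP_ereal_add_left[symmetric] partitions_nonempty) auto
  also have "\<dots> = (SUP p\<in>partitions a c. SUP q\<in>partitions c b.
                      ereal (partition_sum f p + partition_sum f q))"
  proof (rule SUP_cong[OF refl])
    fix p
    show "ereal (partition_sum f p) + curve_length f c b
            = (SUP q\<in>partitions c b. ereal (partition_sum f p + partition_sum f q))"
      unfolding curve_length_eq_SUP[of f c b] plus_ereal.simps(1)[symmetric]
      using assms(2) by (intro SUP_ereal_add_right[symmetric] partitions_nonempty) auto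
  qed
  also have "\<dots> \<le> curve_length f a b"
  proof (intro SUP_least)
    fix p q assume "p \<in> partitions a c" "q \<in> partitions c b"
    moreover obtain t n t' m where "p = (t, n)" "q = (t', m)" by (cases p, cases q)
    ultimately have "(t, n) \<in> partitions a c" "(t', m) \<in> partitions c b" by simp_all
    from partition_sum_le_curve_length[OF partitions_append(1)[OF this], of f]
      partitions_append(2)[OF this, where f = f]
    show "ereal (partition_sum f p + partition_sum f q) \<le> curve_length f a b"
      using \<open>p = (t, n)\<close> \<open>q = (t', m)\<close> by simp
  qed
  finally show ?thesis by (simp add: curve_length_eq_SUP[of f a c])
qed

lemma curve_length_split:
  "a \<le> c \<Longrightarrow> c \<le> b \<Longrightarrow> curve_length f a b = curve_length f a c + curve_length f c b"
  by (intro antisym curve_length_le_add curve_length_add_le)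

lemma curve_length_mono_dist:
  assumes "\<And>x y. x \<in> {a..b} \<Longrightarrow> y \<in> {a..b} \<Longrightarrow> dist (g x) (g y) \<le> dist (f x) (f y)"
  shows "curve_length g a b \<le> curve_length f a b"
  unfolding curve_length_eq_SUP
proof (rule SUP_mono)
  fix p assume p: "p \<in> partitions a b"
  then have "partition_sum g p \<le> partition_sum f p"
    unfolding partition_sum_def
    by (intro sum_mono assms partitions_bounds[of "fst p" "snd p" a b]) auto
  with p show "\<exists>q\<in>partitions a b. ereal (partition_sum g p) \<le> ereal (partition_sum f q)" by auto
qed

lemma curve_length_le_of_dist_le_diff:
  assumes "\<And>x y. a \<le> x \<Longrightarrow> x \<le> y \<Longrightarrow> y \<le> b \<Longrightarrow> dist (f x) (f y) \<le> h y - h x"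
  shows "curve_length f a b \<le> ereal (h b - h a)"
proof (rule curve_length_le)
  fix p assume "p \<in> partitions a b"
  then obtain t n where p: "p = (t, n)" "(t, n) \<in> partitions a b" by (cases p) auto
  have "partition_sum f (t, n) \<le> (\<Sum>k<n. h (t (Suc k)) - h (t k))"
    unfolding partition_sum_def
  proof (simp, rule sum_mono)
    fix k assume "k \<in> {..<n}"
    then show "dist (f (t k)) (f (t (Suc k))) \<le> h (t (Suc k)) - h (t k)"
      using partitions_bounds[OF p(2), of k] partitions_bounds[OF p(2), of "Suc k"] p(2)
      by (intro assms) (auto simp: partitions_def)
  qed
  also have "\<dots> = h b - h a"
    using p(2) sum_lessThan_telescope[of "\<lambda>k. h (t k)"] by (simp add: partitions_def)
  finally show "partition_sum f p \<le> h b - h a" using p(1) by simp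
qed

lemma partition_sum_two_valued:
  assumes "(c, n) \<in> partitions x y" "\<forall>k\<le>n. c k = x \<or> c k = y"
  shows "partition_sum f (c, n) \<le> dist (f x) (f y)"
proof -
  have "x \<le> y" using partitions_bounds[OF assms(1) order_refl] by simp
  have mono: "c k \<le> c (Suc k)" if "k < n" for k using assms(1) that by (simp add: partitions_def)
  have "partition_sum f (c, j) \<le> dist (f x) (f (c j))" if "j \<le> n" for j
    using that
  proof (induction j)
    case (Suc j)
    have "partition_sum f (c, Suc j) = partition_sum f (c, j) + dist (f (c j)) (f (c (Suc j)))"
      by (simp add: partition_sum_def)
    moreover have "c j = x \<or> c (Suc j) = c j"
    proof -
      have "c j \<in> {x, y}" "c (Suc j) \<in> {x, y}" "c j \<le> c (Suc j)"
        using assms(2) Suc.prems mono[of j] by auto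
      then show ?thesis using \<open>x \<le> y\<close> by auto
    qed
    ultimately show ?case using Suc by auto
  qed (simp add: partition_sum_def)
  from this[of n] show ?thesis using assms(1) by (simp add: partitions_def)
qed

definition arclength :: "(real \<Rightarrow> 'a::metric_space) \<Rightarrow> real \<Rightarrow> real" where
  "arclength f t = real_of_ereal (curve_length f 0 t)"

context
  fixes f :: "real \<Rightarrow> 'a::metric_space"
  assumes finite_length: "curve_length f 0 1 < \<infinity>"
begin

lemma curve_length_eq_arclength_diff:
  assumes "0 \<le> x" "x \<le> y" "y \<le> 1"
  shows "curve_length f x y = ereal (arclength f y - arclength f x)"
proof -
  have initial: "curve_length f 0 s = ereal (arclength f s)" if "0 \<le> s" "s \<le> 1" for s
  proof -
    have "curve_length f 0 s \<le> curve_length f 0 1"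
      using curve_length_split[of 0 s 1 f] curve_length_nonneg[of s 1 f] that
      by (simp add: add_increasing2)
    then show ?thesis
      using finite_length curve_length_nonneg[of 0 s f] that unfolding arclength_def
      by (cases "curve_length f 0 s") auto
  qed
  show ?thesis
    using curve_length_split[of 0 x y f] initial[of x] initial[of y] assms
    by (cases "curve_length f x y") auto
qed

lemma arclength_0: "arclength f 0 = 0"
  using curve_length_eq_arclength_diff[of 0 0] by (simp add: arclength_def)

lemma dist_le_arclength_diff:
  "0 \<le> x \<Longrightarrow> x \<le> y \<Longrightarrow> y \<le> 1 \<Longrightarrow> dist (f x) (f y) \<le> arclength f y - arclength f x"
  using dist_le_curve_length[of x y f] curve_length_eq_arclength_diff[of x y] by simp

lemma arclength_mono: "0 \<le> x \<Longrightarrow> x \<le> y \<Longrightarrow> y \<le> 1 \<Longrightarrow> arclength f x \<le> arclength f y"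
  using dist_le_arclength_diff[of x y] zero_le_dist[of "f x" "f y"] by linarith

lemma partition_sum_le_arclength_diff:
  assumes "(t, n) \<in> partitions x y" "0 \<le> x" "y \<le> 1"
  shows "partition_sum f (t, n) \<le> arclength f y - arclength f x"
  using partition_sum_le_curve_length[OF assms(1), of f] partitions_bounds[OF assms(1) order_refl]
    curve_length_eq_arclength_diff[of x y] assms(2,3) by simp

lemma partition_sum_approx_arclength:
  assumes "0 < e"
  obtains t n where "(t, n) \<in> partitions 0 1" "arclength f 1 - e < partition_sum f (t, n)"
proof -
  have "ereal (arclength f 1 - e) < curve_length f 0 1"
    using curve_length_eq_arclength_diff[of 0 1] arclength_0 assms by simp
  then show ?thesis
    using that unfolding curve_length_eq_SUP less_SUP_iff by auto
qed

lemma arclength_diff_le_gap: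
  assumes P: "(t, n) \<in> partitions 0 1" and xy: "0 \<le> x" "x \<le> y" "y \<le> 1"
    and gap: "\<forall>k\<le>n. t k \<le> x \<or> y \<le> t k"
  shows "arclength f y - arclength f x \<le> arclength f 1 - partition_sum f (t, n) + dist (f x) (f y)"
proof -
  define r where "r k = max x (t k)" for k
  have r: "(r, n) \<in> partitions x 1"
    using partitions_clamp(2)[OF P, of x] xy unfolding r_def by simp
  have "partition_sum f (t, n) \<le> partition_sum f (\<lambda>k. min x (t k), n) + partition_sum f (r, n)"
    using partition_sum_le_clamp[OF P] unfolding r_def .
  also have "\<dots> \<le> arclength f x + (partition_sum f (\<lambda>k. min y (r k), n) + partition_sum f (\<lambda>k. max y (r k), n))"
    using partition_sum_le_arclength_diff[OF partitions_clamp(1)[OF P, of x]] arclength_0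
      partition_sum_le_clamp[OF r, of f y] xy by simp
  also have "\<dots> \<le> arclength f x + (dist (f x) (f y) + (arclength f 1 - arclength f y))"
  proof -
    have "partition_sum f (\<lambda>k. min y (r k), n) \<le> dist (f x) (f y)"
      using partitions_clamp(1)[OF r, of y] gap xy
      by (intro partition_sum_two_valued) (auto simp: r_def)
    moreover have "partition_sum f (\<lambda>k. max y (r k), n) \<le> arclength f 1 - arclength f y"
      using partitions_clamp(2)[OF r, of y] xy by (intro partition_sum_le_arclength_diff) auto
    ultimately show ?thesis by simp
  qed
  finally show ?thesis by simp
qed

lemma continuous_on_arclength:
  assumes "continuous_on {0..1} f"
  shows "continuous_on {0..1} (arclength f)"
  unfolding continuous_on_iff
proof (intro ballI allI impI)
  fix s e :: real assume s: "s \<in> {0..1}" and "0 < e"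
  then obtain t n where P: "(t, n) \<in> partitions 0 1"
    and close: "arclength f 1 - e / 2 < partition_sum f (t, n)"
    using partition_sum_approx_arclength[of "e / 2"] by auto
  obtain d1 where "0 < d1" and d1: "\<forall>s'\<in>{0..1}. dist s' s < d1 \<longrightarrow> dist (f s') (f s) < e / 2"
    using assms s \<open>0 < e\<close> unfolding continuous_on_iff by (meson half_gt_zero)
  obtain d2 where "0 < d2" and d2: "\<forall>r\<in>t ` {..n}. r \<noteq> s \<longrightarrow> d2 \<le> dist s r"
    using finite_set_avoid[of "t ` {..n}" s] by blast
  show "\<exists>d>0. \<forall>s'\<in>{0..1}. dist s' s < d \<longrightarrow> dist (arclength f s') (arclength f s) < e"
  proof (intro exI[of _ "min d1 d2"] conjI ballI impI)
    fix s' assume s': "s' \<in> {0..1}" "dist s' s < min d1 d2"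
    \<comment> \<open>a partition point strictly between \<open>s\<close> and \<open>s'\<close> would be closer to \<open>s\<close> than \<open>d2\<close>\<close>
    have gap: "\<forall>k\<le>n. t k \<le> min s s' \<or> max s s' \<le> t k"
    proof (intro allI impI)
      fix k assume "k \<le> n"
      then have "t k = s \<or> d2 \<le> dist s (t k)" using d2 by auto
      then show "t k \<le> min s s' \<or> max s s' \<le> t k"
        using s' by (auto simp: dist_real_def)
    qed
    have "dist (arclength f s') (arclength f s) = arclength f (max s s') - arclength f (min s s')"
      using arclength_mono[of s s'] arclength_mono[of s' s] s s'
      by (auto simp: dist_real_def max_def min_def)
    also have "\<dots> \<le> arclength f 1 - partition_sum f (t, n) + dist (f (min s s')) (f (max s s'))"
      using s s' gap by (intro arclength_diff_le_gap[OF P]) auto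
    also have "\<dots> < e"
    proof -
      have "dist (f s') (f s) < e / 2" using d1 s' by simp
      then show ?thesis using close by (auto simp: min_def max_def dist_commute)
    qed
    finally show "dist (arclength f s') (arclength f s) < e" .
  qed (use \<open>0 < d1\<close> \<open>0 < d2\<close> in simp)
qed

end

lemma continuous_on_dist_dominated:
  fixes f :: "'a::metric_space \<Rightarrow> 'b::metric_space" and h :: "'a \<Rightarrow> 'c::metric_space"
  assumes "continuous_on S h" "\<And>x y. x \<in> S \<Longrightarrow> y \<in> S \<Longrightarrow> dist (f x) (f y) \<le> dist (h x) (h y)"
  shows "continuous_on S f"
  unfolding continuous_on_iff
proof (intro ballI allI impI)
  fix x and e :: real assume "x \<in> S" "0 < e"
  then obtain d where "0 < d" "\<forall>y\<in>S. dist y x < d \<longrightarrow> dist (h y) (h x) < e"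
    using assms(1) unfolding continuous_on_iff by blast
  then show "\<exists>d>0. \<forall>y\<in>S. dist y x < d \<longrightarrow> dist (f y) (f x) < e"
    using assms(2) \<open>x \<in> S\<close> by (meson le_less_trans)
qed

lemma submetry_dist_le:
  assumes "submetry \<pi>"
  shows "dist (\<pi> x) (\<pi> y) \<le> dist x y"
proof -
  have "\<pi> y \<in> \<pi> ` cball x (dist x y)" by simp
  also have "\<dots> = cball (\<pi> x) (dist x y)" using assms unfolding submetry_def by simp
  finally show ?thesis by simp
qed

lemma submetry_lift_point:
  assumes "submetry \<pi>"
  obtains e' where "\<pi> e' = q" "dist e e' \<le> dist (\<pi> e) q"
proof -
  have "q \<in> cball (\<pi> e) (dist (\<pi> e) q)" by simp
  also have "\<dots> = \<pi> ` cball e (dist (\<pi> e) q)" using assms unfolding submetry_def by simp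
  finally show ?thesis using that by auto
qed

lemma closed_submetry_fibre:
  assumes "submetry \<pi>"
  shows "closed (\<pi> -` {q})"
proof -
  have "continuous_on UNIV \<pi>"
    by (rule continuous_on_dist_dominated[OF continuous_on_id]) (simp add: submetry_dist_le[OF assms])
  then show ?thesis by (simp add: closed_vimage continuous_on_eq_continuous_at)
qed

lemma compact_Pi_UNIV:
  fixes C :: "'i \<Rightarrow> 'b::topological_space set"
  assumes "\<And>i. compact (C i)"
  shows "compact (Pi UNIV C)"
proof -
  have "compactin (product_topology (\<lambda>i. euclidean) UNIV) (PiE UNIV C)"
    using assms by (simp add: compactin_PiE)
  then show ?thesis by (simp add: euclidean_product_topology PiE_UNIV_domain)
qed

lemma closed_pointwise_dist_le:
  "closed {f :: 'i \<Rightarrow> 'b::metric_space. dist (f s) (f t) \<le> c}"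
proof -
  have "continuous_on UNIV (\<lambda>f :: 'i \<Rightarrow> 'b. dist (f s) (f t))"
    by (intro continuous_intros continuous_on_product_coordinates)
  then show ?thesis
    using closed_Collect_le[of "\<lambda>f :: 'i \<Rightarrow> 'b. dist (f s) (f t)" "\<lambda>_. c"] by simp
qed

context
  fixes \<pi> :: "'e::heine_borel \<Rightarrow> 'x::metric_space" and \<alpha> :: "real \<Rightarrow> 'x" and u :: 'e
  assumes submetry: "submetry \<pi>" and rectifiable: "rectifiable_curve \<alpha>" and start: "\<pi> u = \<alpha> 0"
begin

private lemma finite_length: "curve_length \<alpha> 0 1 < \<infinity>"
  using rectifiable by (simp add: rectifiable_curve_def)

text \<open>The ball makes the candidate sets compact; outside \<open>[0, 1]\<close> the value only has to be
  compact and nonempty.\<close>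

definition lift_candidates :: "real \<Rightarrow> 'e set" where
  "lift_candidates t =
     (if t \<in> {0..1} then \<pi> -` {\<alpha> t} \<inter> cball u (arclength \<alpha> t) else {u})"

definition arclength_lift_on :: "real set \<Rightarrow> (real \<Rightarrow> 'e) \<Rightarrow> bool" where
  "arclength_lift_on S g \<longleftrightarrow> (\<forall>t. g t \<in> lift_candidates t) \<and>
     (\<forall>x\<in>S. \<forall>y\<in>S. x \<le> y \<longrightarrow> dist (g x) (g y) \<le> arclength \<alpha> y - arclength \<alpha> x)"

lemma lift_candidates_0: "lift_candidates 0 = {u}"
  using start arclength_0[OF finite_length] by (auto simp: lift_candidates_def)

lemma compact_lift_candidates: "compact (lift_candidates t)"
  unfolding lift_candidates_def
  using closed_submetry_fibre[OF submetry] by (simp add: closed_Int_compact)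

lemma lift_candidates_nonempty: "lift_candidates t \<noteq> {}"
proof (cases "t \<in> {0..1}")
  case True
  obtain e where "\<pi> e = \<alpha> t" "dist u e \<le> dist (\<alpha> 0) (\<alpha> t)"
    using submetry_lift_point[OF submetry, of "\<alpha> t" u] start by metis
  moreover have "dist (\<alpha> 0) (\<alpha> t) \<le> arclength \<alpha> t"
    using dist_le_arclength_diff[OF finite_length, of 0 t] arclength_0[OF finite_length] True by simp
  ultimately have "e \<in> lift_candidates t" using True by (simp add: lift_candidates_def)
  then show ?thesis by blast
qed (auto simp: lift_candidates_def)

lemma arclength_lift_on_insert_above:
  assumes g: "arclength_lift_on A g" and "finite A" "A \<noteq> {}" "\<forall>a\<in>A. a < b" "b \<le> 1" "A \<subseteq> {0..1}"
  shows "\<exists>g'. arclength_lift_on (insert b A) g'"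
proof -
  define m where "m = Max A"
  have "m \<in> A" "\<forall>a\<in>A. a \<le> m" using assms(2,3) by (simp_all add: m_def)
  then have m: "0 \<le> m" "m < b" "b \<le> 1" using assms(4-6) by auto
  have "g m \<in> lift_candidates m" using g by (simp add: arclength_lift_on_def)
  then have gm: "\<pi> (g m) = \<alpha> m" "dist u (g m) \<le> arclength \<alpha> m"
    using m by (simp_all add: lift_candidates_def)
  obtain e where e: "\<pi> e = \<alpha> b" "dist (g m) e \<le> dist (\<alpha> m) (\<alpha> b)"
    using submetry_lift_point[OF submetry, of "\<alpha> b" "g m"] gm(1) by metis
  have step: "dist (g m) e \<le> arclength \<alpha> b - arclength \<alpha> m"
    using e(2) dist_le_arclength_diff[OF finite_length, of m b] m by simp
  have "dist u e \<le> arclength \<alpha> b"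
    using dist_triangle[of u e "g m"] gm(2) step by simp
  then have "e \<in> lift_candidates b" using e(1) m by (simp add: lift_candidates_def)
  moreover have "dist (g x) e \<le> arclength \<alpha> b - arclength \<alpha> x" if "x \<in> A" for x
  proof -
    have "dist (g x) (g m) \<le> arclength \<alpha> m - arclength \<alpha> x"
      using g \<open>m \<in> A\<close> \<open>\<forall>a\<in>A. a \<le> m\<close> that unfolding arclength_lift_on_def by blast
    then show ?thesis using dist_triangle[of "g x" e "g m"] step by linarith
  qed
  ultimately have "arclength_lift_on (insert b A) (g(b := e))"
    using g assms(4) unfolding arclength_lift_on_def by (auto simp: dist_commute)
  then show ?thesis by blast
qed

lemma finite_arclength_lift:
  assumes "finite A" "A \<subseteq> {0..1}"
  shows "\<exists>g. arclength_lift_on A g"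
  using assms
proof (induction A rule: finite_linorder_max_induct)
  case empty
  have "\<forall>t. (SOME e. e \<in> lift_candidates t) \<in> lift_candidates t"
    using lift_candidates_nonempty by (simp add: some_in_eq)
  then show ?case
    unfolding arclength_lift_on_def by (intro exI[of _ "\<lambda>t. SOME e. e \<in> lift_candidates t"]) simp
next
  case (insert b A)
  then obtain g where g: "arclength_lift_on A g" by auto
  show ?case
  proof (cases "A = {}")
    case True
    then show ?thesis using g unfolding arclength_lift_on_def by auto
  next
    case False
    then show ?thesis using arclength_lift_on_insert_above[OF g insert(1) False] insert by auto
  qed
qed

lemma arclength_lift: "\<exists>g. arclength_lift_on {0..1} g"
proof -
  define K where "K = Pi UNIV lift_candidates"
  define T where "T = (\<lambda>(x, y). {g :: real \<Rightarrow> 'e. dist (g x) (g y) \<le> arclength \<alpha> y - arclength \<alpha> x})"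
  define I where "I = {(x, y). 0 \<le> x \<and> x \<le> y \<and> y \<le> (1::real)}"
  have "K \<inter> \<Inter>(T ` I) \<noteq> {}"
  proof (rule compact_imp_fip)
    show "compact K" unfolding K_def by (intro compact_Pi_UNIV compact_lift_candidates)
    show "closed S" if "S \<in> T ` I" for S using that unfolding T_def by (auto simp: closed_pointwise_dist_le)
  next
    fix F assume "finite F" "F \<subseteq> T ` I"
    then obtain J where J: "J \<subseteq> I" "finite J" "F = T ` J" by (meson finite_subset_image)
    then obtain g where g: "arclength_lift_on (fst ` J \<union> snd ` J) g"
      using finite_arclength_lift[of "fst ` J \<union> snd ` J"] by (force simp: I_def)
    then have "g \<in> K" unfolding arclength_lift_on_def K_def by simp
    moreover have "g \<in> T p" if "p \<in> J" for p
      using g that J(1) unfolding arclength_lift_on_def T_def I_def by (force split: prod.splits)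
    ultimately show "K \<inter> \<Inter>F \<noteq> {}" using J(3) by blast
  qed
  then obtain g where "g \<in> K" "\<forall>p\<in>I. g \<in> T p" by blast
  then have "arclength_lift_on {0..1} g" unfolding arclength_lift_on_def K_def T_def I_def by auto
  then show ?thesis by blast
qed

lemma arclength_lift_on_over:
  assumes "arclength_lift_on S g" "t \<in> {0..1}"
  shows "\<pi> (g t) = \<alpha> t"
  using assms unfolding arclength_lift_on_def lift_candidates_def by (auto dest: spec[of _ t])

lemma horizontal_arclength_lift:
  assumes g: "arclength_lift_on {0..1} g"
  shows "horizontal \<pi> g"
proof -
  have lip: "dist (g x) (g y) \<le> arclength \<alpha> y - arclength \<alpha> x" if "0 \<le> x" "x \<le> y" "y \<le> 1" for x y
    using g that unfolding arclength_lift_on_def by auto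
  have "continuous_on {0..1} g"
  proof (rule continuous_on_dist_dominated[OF continuous_on_arclength])
    show "continuous_on {0..1} \<alpha>" "curve_length \<alpha> 0 1 < \<infinity>"
      using rectifiable by (simp_all add: rectifiable_curve_def)
    fix x y :: real assume "x \<in> {0..1}" "y \<in> {0..1}"
    then show "dist (g x) (g y) \<le> dist (arclength \<alpha> x) (arclength \<alpha> y)"
      using lip[of x y] lip[of y x] by (cases "x \<le> y") (auto simp: dist_real_def dist_commute)
  qed
  have "curve_length g 0 1 \<le> ereal (arclength \<alpha> 1 - arclength \<alpha> 0)"
    using lip by (rule curve_length_le_of_dist_le_diff)
  also have "\<dots> = curve_length \<alpha> 0 1"
    using curve_length_eq_arclength_diff[OF finite_length, of 0 1] by simp
  also have "\<dots> = curve_length (\<pi> \<circ> g) 0 1"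
    using arclength_lift_on_over[OF g] by (intro antisym curve_length_mono_dist) auto
  also have "\<dots> \<le> curve_length g 0 1"
    by (intro curve_length_mono_dist) (simp add: submetry_dist_le[OF submetry])
  finally show ?thesis
    using \<open>continuous_on {0..1} g\<close> by (simp add: horizontal_def)
qed

lemma horizontal_lift_exists:
  "\<exists>\<gamma>. horizontal \<pi> \<gamma> \<and> \<gamma> 0 = u \<and> (\<forall>t\<in>{0..1}. \<pi> (\<gamma> t) = \<alpha> t)"
proof -
  obtain g where g: "arclength_lift_on {0..1} g" using arclength_lift by blast
  then have "g 0 \<in> lift_candidates 0" by (simp add: arclength_lift_on_def)
  then have "g 0 = u" using lift_candidates_0 by blast
  with g show ?thesis using horizontal_arclength_lift arclength_lift_on_over by blast
qed

end

theorem mainTheorem7: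
  fixes \<pi> :: "'e::heine_borel \<Rightarrow> 'x::heine_borel"
    and \<alpha> :: "real \<Rightarrow> 'x" and u :: 'e
  assumes "submetry \<pi>"
    and "rectifiable_curve \<alpha>"
    and "\<pi> u = \<alpha> 0"
  shows "(\<exists>\<gamma>. horizontal \<pi> \<gamma> \<and> \<gamma> 0 = u \<and> (\<forall>t\<in>{0..1}. \<pi> (\<gamma> t) = \<alpha> t))
         \<and> horiz_transport \<pi> \<alpha> u \<noteq> {}"
  using horizontal_lift_exists[OF assms] unfolding horiz_transport_def by blast

end
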